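(* Let $u_0,u_1,u_2,u_3$ be nodes of $G$ such that $u_3$ lies on a shortest path between $u_1$ and $u_2$, all pairwise distances among $u_0,u_1,u_2,u_3$ are strictly positive except possibly $d_{u_1,u_3}$, and $$d_{u_1,u_3}=\left\lceil \frac{d_{u_1,u_2}+d_{u_0,u_1}-d_{u_0,u_2}}{2}\right\rceil .$$ Then $$\left\lceil \frac{d_{u_0,u_1}+d_{u_0,u_2}+d_{u_1,u_2}}{2}\right\rceil \le d_{u_0,u_3}+d_{u_1,u_2}\le \left\lceil \frac{d_{u_0,u_1}+d_{u_0,u_2}+d_{u_1,u_2}}{2}\right\rceil + 2\,\delta_{u_0,u_1,u_2,u_3}.$$
   Context: $G=(V,E)$ is a finite connected undirected graph with $n\ge 4$ nodes and $d_{u,v}$ denotes the shortest-path distance (number of edges) between nodes $u,v$. For any four nodes $w_1,w_2,w_3,w_4$, form the three sums $d_{w_1,w_2}+d_{w_3,w_4}$, $d_{w_1,w_3}+d_{w_2,w_4}$, $d_{w_1,w_4}+d_{w_2,w_3}$, order them as $S\le M\le L$, and set $\delta_{w_1,w_2,w_3,w_4}=(L-M)/2$. Also $\delta_{\mathrm{worst}}(G)=\max_{w_1,w_2,w_3,w_4\in V}\delta_{w_1,w_2,w_3,w_4}$. *)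

theory Defs
  imports Complex_Main
begin

definition graph :: "'a set \<Rightarrow> ('a \<times> 'a) set \<Rightarrow> bool" where
  "graph V E \<longleftrightarrow> finite V \<and> E \<subseteq> V \<times> V \<and> sym E \<and> irrefl E"

definition walk :: "'a set \<Rightarrow> ('a \<times> 'a) set \<Rightarrow> 'a \<Rightarrow> 'a \<Rightarrow> 'a list \<Rightarrow> bool" where
  "walk V E u v xs \<longleftrightarrow> xs \<noteq> [] \<and> hd xs = u \<and> last xs = v \<and> set xs \<subseteq> V \<and>
     (\<forall>i. Suc i < length xs \<longrightarrow> (xs ! i, xs ! Suc i) \<in> E)"

definition connected_graph :: "'a set \<Rightarrow> ('a \<times> 'a) set \<Rightarrow> bool" where
  "connected_graph V E \<longleftrightarrow> (\<forall>u\<in>V. \<forall>v\<in>V. \<exists>xs. walk V E u v xs)"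

definition gdist :: "'a set \<Rightarrow> ('a \<times> 'a) set \<Rightarrow> 'a \<Rightarrow> 'a \<Rightarrow> nat" where
  "gdist V E u v = (LEAST n. \<exists>xs. walk V E u v xs \<and> length xs = Suc n)"

definition on_shortest_path :: "'a set \<Rightarrow> ('a \<times> 'a) set \<Rightarrow> 'a \<Rightarrow> 'a \<Rightarrow> 'a \<Rightarrow> bool" where
  "on_shortest_path V E u v w \<longleftrightarrow>
     (\<exists>xs. walk V E u v xs \<and> length xs = Suc (gdist V E u v) \<and> w \<in> set xs)"

definition delta4 :: "'a set \<Rightarrow> ('a \<times> 'a) set \<Rightarrow> 'a \<Rightarrow> 'a \<Rightarrow> 'a \<Rightarrow> 'a \<Rightarrow> real" where
  "delta4 V E w1 w2 w3 w4 =
    (let d = gdist V E;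
         s1 = real (d w1 w2 + d w3 w4);
         s2 = real (d w1 w3 + d w2 w4);
         s3 = real (d w1 w4 + d w2 w3);
         L = max s1 (max s2 s3);
         S = min s1 (min s2 s3);
         M = s1 + s2 + s3 - L - S
     in (L - M) / 2)"

end

theory Submission
  imports Defs
begin

(*
  Write a = d(u0,u1), b = d(u0,u2), c = d(u1,u2), x = d(u1,u3), y = d(u2,u3),
  e = d(u0,u3).  Three facts drive the proof:
    (1) u3 lies on a shortest u1-u2 path, so x + y <= c;
    (2) the triangle inequality gives b <= e + y;
    (3) the hypothesis x = ceil((c + a - b)/2) gives 2x >= c + a - b.
  From these the three pair sums of the quadruple are ordered
  a + y <= b + x <= e + c, so delta(u0,u1,u2,u3) = ((e + c) - (b + x))/2;
  moreover ceil((a + b + c)/2) = b + x.  Both claimed inequalities follow: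
  the lower bound is b + x <= e + c, the upper bound holds with equality.
*)

lemma walk_conv:
  "walk V E u v xs \<longleftrightarrow>
     xs \<noteq> [] \<and> hd xs = u \<and> last xs = v \<and> set xs \<subseteq> V \<and>
     successively (\<lambda>x y. (x, y) \<in> E) xs"
  unfolding walk_def successively_conv_nth ..

lemma walk_append:
  assumes "walk V E u v xs" and "walk V E v w ys"
  shows "walk V E u w (xs @ tl ys)"
proof -
  obtain ys' where ys: "ys = v # ys'"
    using assms(2) unfolding walk_conv by (metis list.collapse)
  have "successively (\<lambda>x y. (x, y) \<in> E) (v # ys')"
    using assms(2) ys unfolding walk_conv by simp
  then have "successively (\<lambda>x y. (x, y) \<in> E) (xs @ ys')"
    using assms(1) unfolding walk_conv
    by (auto simp: successively_append_iff successively_Cons)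
  then show ?thesis
    using assms ys unfolding walk_conv by (cases ys') auto
qed

lemma walk_rev:
  assumes "sym E" and "walk V E u v xs"
  shows "walk V E v u (rev xs)"
proof -
  have "successively (\<lambda>x y. (y, x) \<in> E) xs"
    using assms(2) unfolding walk_conv
    by (auto elim: successively_mono intro: symD[OF assms(1)])
  then show ?thesis
    using assms(2) unfolding walk_conv by (simp add: hd_rev last_rev)
qed

lemma walk_split:
  assumes "walk V E u v (as @ w # bs)"
  shows "walk V E u w (as @ [w])" and "walk V E w v (w # bs)"
  using assms unfolding walk_conv
  by (auto simp: successively_append_iff successively_Cons hd_append split: if_splits)

lemma gdist_le_walk:
  assumes "walk V E u v xs"
  shows "gdist V E u v \<le> length xs - 1"
  unfolding gdist_def
  using assms by (intro Least_le exI[of _ xs]) (cases xs, auto simp: walk_def)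

lemma shortest_walk_exists:
  assumes "walk V E u v xs"
  shows "\<exists>ys. walk V E u v ys \<and> length ys = Suc (gdist V E u v)"
proof -
  have "length xs = Suc (length xs - 1)"
    using assms unfolding walk_def by (cases xs) auto
  then have "\<exists>n ys. walk V E u v ys \<and> length ys = Suc n"
    using assms by blast
  then show ?thesis
    unfolding gdist_def by (rule LeastI_ex)
qed

lemma shortest_walk_connected:
  assumes "connected_graph V E" and "u \<in> V" and "v \<in> V"
  obtains ys where "walk V E u v ys" and "length ys = Suc (gdist V E u v)"
  using assms shortest_walk_exists unfolding connected_graph_def by metis

lemma gdist_triangle:
  assumes "connected_graph V E" and "u \<in> V" and "v \<in> V" and "w \<in> V"
  shows "gdist V E u w \<le> gdist V E u v + gdist V E v w"
proof -
  obtain xs where xs: "walk V E u v xs" "length xs = Suc (gdist V E u v)"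
    using shortest_walk_connected assms(1-3) .
  obtain ys where ys: "walk V E v w ys" "length ys = Suc (gdist V E v w)"
    using shortest_walk_connected assms(1,3,4) .
  have "gdist V E u w \<le> length (xs @ tl ys) - 1"
    using gdist_le_walk walk_append[OF xs(1) ys(1)] .
  then show ?thesis using xs(2) ys(2) by simp
qed

lemma gdist_sym:
  assumes "graph V E" and "connected_graph V E" and "u \<in> V" and "v \<in> V"
  shows "gdist V E u v = gdist V E v u"
proof -
  have "sym E" using assms(1) unfolding graph_def by blast
  have le: "gdist V E p q \<le> gdist V E q p" if p: "p \<in> V" and q: "q \<in> V" for p q
  proof -
    obtain xs where "walk V E q p xs" "length xs = Suc (gdist V E q p)"
      using shortest_walk_connected assms(2) q p .
    then show ?thesis using gdist_le_walk[OF walk_rev[OF \<open>sym E\<close>]] by fastforce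
  qed
  show ?thesis using le assms(3,4) by (simp add: le_antisym)
qed

lemma on_shortest_path_split:
  assumes "on_shortest_path V E u v w"
  shows "gdist V E u w + gdist V E w v \<le> gdist V E u v"
proof -
  obtain xs where xs: "walk V E u v xs" "length xs = Suc (gdist V E u v)" "w \<in> set xs"
    using assms unfolding on_shortest_path_def by blast
  obtain as bs where split: "xs = as @ w # bs" using xs(3) by (meson split_list)
  have "gdist V E u w \<le> length as"
    using gdist_le_walk[OF walk_split(1)] xs(1) split by fastforce
  moreover have "gdist V E w v \<le> length bs"
    using gdist_le_walk[OF walk_split(2)] xs(1) split by fastforce
  ultimately show ?thesis using xs(2) split by simp
qed

lemma delta4_ordered:
  assumes "gdist V E w1 w2 + gdist V E w3 w4 \<le> gdist V E w1 w3 + gdist V E w2 w4"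
    and "gdist V E w1 w3 + gdist V E w2 w4 \<le> gdist V E w1 w4 + gdist V E w2 w3"
  shows "delta4 V E w1 w2 w3 w4 =
    (real (gdist V E w1 w4 + gdist V E w2 w3) - real (gdist V E w1 w3 + gdist V E w2 w4)) / 2"
  using assms unfolding delta4_def Let_def by (simp add: max_def min_def)

lemma ceiling_half_shift:
  fixes p :: real and n :: int
  shows "\<lceil>(p + 2 * of_int n) / 2\<rceil> = \<lceil>p / 2\<rceil> + n"
proof -
  have "(p + 2 * of_int n) / 2 = p / 2 + of_int n" by simp
  then show ?thesis by (metis ceiling_add_of_int)
qed

theorem mainTheorem1:
  fixes V :: "'a set" and E :: "('a \<times> 'a) set" and u0 u1 u2 u3 :: 'a
  assumes "graph V E" and "connected_graph V E" and "card V \<ge> 4"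
    and "u0 \<in> V" "u1 \<in> V" "u2 \<in> V" "u3 \<in> V"
    and "on_shortest_path V E u1 u2 u3"
    and "gdist V E u0 u1 > 0" "gdist V E u0 u2 > 0" "gdist V E u0 u3 > 0"
        "gdist V E u1 u2 > 0" "gdist V E u2 u3 > 0"
    and "real (gdist V E u1 u3) =
           real_of_int \<lceil>(real (gdist V E u1 u2) + real (gdist V E u0 u1)
                         - real (gdist V E u0 u2)) / 2\<rceil>"
  shows "real_of_int \<lceil>(real (gdist V E u0 u1) + real (gdist V E u0 u2) + real (gdist V E u1 u2)) / 2\<rceil>
           \<le> real (gdist V E u0 u3 + gdist V E u1 u2)
       \<and> real (gdist V E u0 u3 + gdist V E u1 u2)
           \<le> real_of_int \<lceil>(real (gdist V E u0 u1) + real (gdist V E u0 u2) + real (gdist V E u1 u2)) / 2\<rceil>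
             + 2 * delta4 V E u0 u1 u2 u3"
proof -
  let ?d = "gdist V E"
  have path: "?d u1 u3 + ?d u2 u3 \<le> ?d u1 u2"
    using on_shortest_path_split[OF assms(8)] gdist_sym[OF assms(1,2,7,6)] by simp
  have tri: "?d u0 u2 \<le> ?d u0 u3 + ?d u2 u3"
    using gdist_triangle[OF assms(2,4,7,6)] gdist_sym[OF assms(1,2,7,6)] by simp
  have "(real (?d u1 u2) + real (?d u0 u1) - real (?d u0 u2)) / 2 \<le> real (?d u1 u3)"
    using assms(14) by (simp add: le_of_int_ceiling)
  then have half: "real (?d u1 u2) + real (?d u0 u1) - real (?d u0 u2) \<le> 2 * real (?d u1 u3)"
    by simp
  have ceil: "real_of_int \<lceil>(real (?d u0 u1) + real (?d u0 u2) + real (?d u1 u2)) / 2\<rceil>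
      = real (?d u0 u2 + ?d u1 u3)"
    using assms(14) ceiling_half_shift[of "real (?d u1 u2) + real (?d u0 u1) - real (?d u0 u2)"
        "int (?d u0 u2)"] by (simp add: algebra_simps)
  have "?d u0 u1 + ?d u2 u3 \<le> ?d u0 u2 + ?d u1 u3"
    using path half by linarith
  moreover have ordered: "?d u0 u2 + ?d u1 u3 \<le> ?d u0 u3 + ?d u1 u2"
    using path tri by linarith
  ultimately have "delta4 V E u0 u1 u2 u3
      = (real (?d u0 u3 + ?d u1 u2) - real (?d u0 u2 + ?d u1 u3)) / 2"
    by (rule delta4_ordered)
  then show ?thesis using ceil ordered by simp
qed

end
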